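(* For all nonnegative integers $n,\ell,m$, the number of partitions of $n$ with exactly $\ell$ parts and $2$-measure equal to $m$ equals the number of partitions of $n$ with exactly $\ell$ parts whose Durfee square has side length $m$.
   Context: For a partition $\lambda$ and positive integer $k$, the $k$-measure of $\lambda$ is the length of the longest subsequence of the parts of $\lambda$ (listed in weakly decreasing order) in which the difference between any two consecutive members of the subsequence is at least $k$. The Durfee square of a partition is the largest square $s\times s$ contained in its Young (Ferrers) diagram; its length is $s$, i.e., the largest $s$ such that $\lambda$ has at least $s$ parts of size at least $s$. *)

theory Defs
  imports Main "HOL-Library.Sublist"
begin

definition partitions :: "nat \<Rightarrow> nat list set" where
  "partitions n = {xs. sorted_wrt (\<ge>) xs \<and> (\<forall>x\<in>set xs. 0 < x) \<and> sum_list xs = n}"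

definition k_measure :: "nat \<Rightarrow> nat list \<Rightarrow> nat" where
  "k_measure k xs = (GREATEST m. \<exists>ys. subseq ys xs \<and> successively (\<lambda>a b. a \<ge> b + k) ys \<and> length ys = m)"

definition durfee :: "nat list \<Rightarrow> nat" where
  "durfee xs = (GREATEST s. s \<le> length (filter (\<lambda>x. s \<le> x) xs))"

end

theory Submission
  imports Defs
begin

(* Both statistics obey the same recursion in the first column. A partition of n with l parts
  arises from a unique pair (k, ys), ys a partition of n - l with l - k parts, by adding a first
  column of length l; k is the number of parts equal to 1. Pair the 2-measure m with the flag b
  "the greedy 2-separated chain (largest part first, then always the largest part at least 2
  smaller) ends in 1". Adding the column shifts the chain of ys up by one and lets it take one
  further 1 exactly when k > 0 and b fails; so (m, b) becomes (m + 1, True) in that case and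
  (m, False) otherwise.

  The Durfee side d paired with the flag "the d-th part equals d" follows the same rule along a
  different bijection between the same sets. Let A be the first d parts of ys and B the others.
  If k > 0 and the flag fails, take A, d + 1, B + 1 and k - 1 ones: the square grows to side
  d + 1 and has the flag. Otherwise, with j the number of parts of B equal to d, take A + (j + 1),
  (B without its parts d) + 1 and j + k ones: the side stays d and the flag is lost.

  So for both statistics the number of partitions of n with l parts and a given pair obeys one
  recursion with one initial value; forgetting the flag gives the theorem. *)

lemma length_le_sum_list: "\<forall>x\<in>set xs. 0 < x \<Longrightarrow> length xs \<le> sum_list (xs :: nat list)"
  by (induction xs) auto

lemma finite_partitions: "finite (partitions n)"
proof (rule finite_subset)
  show "partitions n \<subseteq> {xs. set xs \<subseteq> {0..n} \<and> length xs \<le> n}"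
    using length_le_sum_list member_le_sum_list by (fastforce simp: partitions_def)
  show "finite {xs. set xs \<subseteq> {0..n} \<and> length xs \<le> n}"
    using finite_lists_length_le[of "{0..n}" n] by simp
qed

lemma partitions_0: "partitions 0 = {[]}"
proof -
  have "xs = []" if "xs \<in> partitions 0" for xs
    using that by (cases xs) (auto simp: partitions_def)
  then show ?thesis by (auto simp: partitions_def)
qed

lemma length_partitions_le: "xs \<in> partitions n \<Longrightarrow> length xs \<le> n"
  using length_le_sum_list by (auto simp: partitions_def)

lemma drop_partitions: "xs \<in> partitions n \<Longrightarrow> drop i xs \<in> partitions (n - sum_list (take i xs))"
  using sum_list_append[of "take i xs" "drop i xs"]
  by (auto simp: partitions_def dest: in_set_dropD)

lemma sorted_wrt_replicate: "sorted_wrt (\<ge>) (replicate k (c :: nat))"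
  by (induction k) auto

lemma sum_list_map_Suc: "sum_list (map Suc xs) = sum_list xs + length xs"
  by (induction xs) auto

lemma sum_list_map_add_const: "sum_list (map (\<lambda>a. a + c) A) = sum_list A + length A * (c :: nat)"
  by (induction A) auto

lemma count_list_replicate: "count_list (replicate k x) x = k"
  by (induction k) auto

section \<open>The k-measure as the length of a greedy chain\<close>

lemma successively_gap_iff_sorted_wrt:
  "successively (\<lambda>a b. b + k \<le> a) ys \<longleftrightarrow> sorted_wrt (\<lambda>a b. b + k \<le> a) (ys :: nat list)"
  by (rule successively_conv_sorted_wrt) (auto simp: transp_def)

fun greedy_chain :: "nat \<Rightarrow> nat \<Rightarrow> nat list \<Rightarrow> nat list" where
  "greedy_chain k t [] = []"
| "greedy_chain k t (x # xs) =
     (if x + k \<le> t then x # greedy_chain k x xs else greedy_chain k t xs)"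

lemma greedy_chain_subseq: "subseq (greedy_chain k t xs) xs"
  by (induction xs arbitrary: t) auto

lemma greedy_chain_set: "set (greedy_chain k t xs) \<subseteq> set xs"
  by (induction xs arbitrary: t) auto

lemma greedy_chain_bounded: "y \<in> set (greedy_chain k t xs) \<Longrightarrow> y + k \<le> t"
  by (induction xs arbitrary: t) (force split: if_splits)+

lemma greedy_chain_sorted: "sorted_wrt (\<lambda>a b. b + k \<le> a) (greedy_chain k t xs)"
  by (induction xs arbitrary: t) (auto dest: greedy_chain_bounded)

lemma greedy_chain_longest:
  assumes "sorted_wrt (\<ge>) xs" "subseq ys xs" "sorted_wrt (\<lambda>a b. b + k \<le> a) ys"
    "\<forall>y\<in>set ys. y + k \<le> t"
  shows "length ys \<le> length (greedy_chain k t xs)"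
  using assms
proof (induction xs arbitrary: t ys)
  case Nil
  then show ?case by simp
next
  case (Cons x xs)
  show ?case
  proof (cases ys)
    case Nil
    then show ?thesis by simp
  next
    case (Cons y ys')
    have "subseq ys' xs"
      using \<open>subseq ys (x # xs)\<close> Cons by (auto split: if_splits dest: subseq_Cons')
    show ?thesis
    proof (cases "x + k \<le> t")
      case True
      have "y \<in> set (x # xs)"
        using list_emb_set[OF \<open>subseq ys (x # xs)\<close>, of y] Cons by auto
      then have "y \<le> x" using \<open>sorted_wrt (\<ge>) (x # xs)\<close> by auto
      then have "\<forall>z\<in>set ys'. z + k \<le> x" using \<open>sorted_wrt _ ys\<close> Cons by auto
      then have "length ys' \<le> length (greedy_chain k x xs)"
        using Cons.IH \<open>subseq ys' xs\<close> Cons.prems(1,3) \<open>ys = y # ys'\<close> by simp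
      then show ?thesis using True Cons by simp
    next
      case False
      then have "subseq ys xs" using Cons.prems(2,4) Cons by auto
      then show ?thesis using Cons.IH Cons.prems False by simp
    qed
  qed
qed

(* The bound hd xs + k excludes no part; for xs = [] the unspecified value hd [] is irrelevant. *)
lemma k_measure_eq_length_greedy_chain:
  assumes "sorted_wrt (\<ge>) xs"
  shows "k_measure k xs = length (greedy_chain k (hd xs + k) xs)"
  unfolding k_measure_def successively_gap_iff_sorted_wrt
proof (rule Greatest_equality)
  show "\<exists>ys. subseq ys xs \<and> sorted_wrt (\<lambda>a b. b + k \<le> a) ys
      \<and> length ys = length (greedy_chain k (hd xs + k) xs)"
    using greedy_chain_subseq greedy_chain_sorted by blast
next
  fix m
  assume "\<exists>ys. subseq ys xs \<and> sorted_wrt (\<lambda>a b. b + k \<le> a) ys \<and> length ys = m"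
  then obtain ys where ys: "subseq ys xs" "sorted_wrt (\<lambda>a b. b + k \<le> a) ys" "length ys = m"
    by blast
  have "y \<le> hd xs" if "y \<in> set ys" for y
  proof -
    have "y \<in> set xs" using list_emb_set[OF ys(1) that] by auto
    then show ?thesis using assms by (cases xs) auto
  qed
  then show "m \<le> length (greedy_chain k (hd xs + k) xs)"
    using greedy_chain_longest[OF assms ys(1,2)] ys(3) by auto
qed

section \<open>Adding and removing a first column\<close>

definition add_column :: "nat \<Rightarrow> nat list \<Rightarrow> nat list" where
  "add_column k ys = map Suc ys @ replicate k 1"

definition remove_column :: "nat list \<Rightarrow> nat list" where
  "remove_column zs = map (\<lambda>z. z - 1) (filter (\<lambda>z. 1 < z) zs)"

lemma length_add_column [simp]: "length (add_column k ys) = length ys + k"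
  by (simp add: add_column_def)

lemma add_column_partitions:
  "ys \<in> partitions n \<Longrightarrow> add_column k ys \<in> partitions (n + length ys + k)"
  by (auto simp: partitions_def add_column_def sorted_wrt_append sorted_wrt_map sum_list_map_Suc
      sum_list_replicate sorted_wrt_replicate)

lemma remove_add_column:
  assumes "\<forall>y\<in>set ys. 0 < y"
  shows "remove_column (add_column k ys) = ys" "count_list (add_column k ys) 1 = k"
proof -
  have "filter (\<lambda>z. 1 < z) (map Suc ys) = map Suc ys" "1 \<notin> set (map Suc ys)"
    using assms by (auto simp: filter_id_conv)
  then show "remove_column (add_column k ys) = ys" "count_list (add_column k ys) 1 = k"
    by (simp_all add: remove_column_def add_column_def filter_replicate map_idI
        count_list_replicate)
qed

lemma add_remove_column:
  "zs \<in> partitions n \<Longrightarrow> add_column (count_list zs 1) (remove_column zs) = zs"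
proof (induction zs arbitrary: n)
  case Nil
  then show ?case by (simp add: add_column_def remove_column_def)
next
  case (Cons z zs)
  then have zs: "zs \<in> partitions (n - z)" and "0 < z" and le: "\<forall>x\<in>set zs. x \<le> z"
    by (auto simp: partitions_def)
  show ?case
  proof (cases "z = 1")
    case True
    then have "remove_column zs = []" using le by (auto simp: remove_column_def filter_empty_conv)
    then show ?thesis using Cons.IH[OF zs] True by (simp add: add_column_def remove_column_def)
  next
    case False
    then show ?thesis using Cons.IH[OF zs] \<open>0 < z\<close> by (simp add: add_column_def remove_column_def)
  qed
qed

lemma remove_column_partitions:
  assumes "zs \<in> partitions n"
  shows "remove_column zs \<in> partitions (n - length zs)"
proof -
  let ?R = "remove_column zs"
  have "sorted_wrt (\<ge>) ?R" "\<forall>y\<in>set ?R. 0 < y"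
    using assms
    by (auto simp: partitions_def remove_column_def intro!: sorted_wrt_map_mono sorted_wrt_filter)
  then have "add_column (count_list zs 1) ?R
      \<in> partitions (sum_list ?R + length ?R + count_list zs 1)"
    by (intro add_column_partitions) (simp add: partitions_def)
  then have "n = sum_list ?R + length zs"
    using add_remove_column[OF assms] assms length_add_column[of "count_list zs 1" ?R]
    by (simp add: partitions_def)
  then show ?thesis using \<open>sorted_wrt (\<ge>) ?R\<close> \<open>\<forall>y\<in>set ?R. 0 < y\<close> by (simp add: partitions_def)
qed

lemma remove_column_less:
  "\<forall>b\<in>set B. b \<le> M \<Longrightarrow> r \<in> set (remove_column B) \<Longrightarrow> r < M"
  by (auto simp: remove_column_def)

section \<open>Statistics that evolve along a column decomposition\<close>

locale column_decomposition =
  fixes step :: "nat \<Rightarrow> nat list \<Rightarrow> nat list"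
    and stat :: "nat list \<Rightarrow> 's"
    and stat_update :: "nat \<Rightarrow> 's \<Rightarrow> 's"
  assumes step_partitions: "ys \<in> partitions n \<Longrightarrow> step k ys \<in> partitions (n + length ys + k)"
    and length_step: "ys \<in> partitions n \<Longrightarrow> length (step k ys) = length ys + k"
    and stat_step: "ys \<in> partitions n \<Longrightarrow> stat (step k ys) = stat_update k (stat ys)"
    and step_inj: "ys \<in> partitions n \<Longrightarrow> ys' \<in> partitions n' \<Longrightarrow> step k ys = step k' ys'
      \<Longrightarrow> k = k' \<and> ys = ys'"
    and step_surj: "zs \<in> partitions n \<Longrightarrow> zs \<noteq> [] \<Longrightarrow> \<exists>k n' ys. ys \<in> partitions n' \<and> step k ys = zs"
begin

lemma partitions_eq_image_step:
  assumes "0 < l" "l \<le> n"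
  shows "{xs \<in> partitions n. length xs = l \<and> stat xs \<in> S} = case_prod step `
    (SIGMA k:{..l}. {ys \<in> partitions (n - l). length ys = l - k \<and> stat ys \<in> stat_update k -` S})"
    (is "?L = case_prod step ` ?R")
proof
  show "case_prod step ` ?R \<subseteq> ?L"
  proof
    fix xs assume "xs \<in> case_prod step ` ?R"
    then obtain k ys where "xs = step k ys" "k \<le> l" "ys \<in> partitions (n - l)"
      "length ys = l - k" "stat ys \<in> stat_update k -` S"
      by auto
    then show "xs \<in> ?L"
      using assms step_partitions[of ys "n - l" k] length_step[of ys "n - l" k]
        stat_step[of ys "n - l" k] by simp
  qed
next
  show "?L \<subseteq> case_prod step ` ?R"
  proof
    fix xs assume xs: "xs \<in> ?L"
    then have "xs \<noteq> []" using assms by auto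
    then obtain k n' ys where ys: "ys \<in> partitions n'" "step k ys = xs"
      using step_surj xs by blast
    have "n' + length ys + k = n"
      using step_partitions[OF ys(1), of k] xs ys(2) by (auto simp: partitions_def)
    moreover have "length ys + k = l" using length_step[OF ys(1), of k] xs ys(2) by simp
    ultimately have "(k, ys) \<in> ?R" using ys xs stat_step[OF ys(1), of k] by auto
    then show "xs \<in> case_prod step ` ?R" using ys(2) by force
  qed
qed

lemma inj_on_step: "inj_on (case_prod step) (UNIV \<times> partitions n)"
  by (auto intro!: inj_onI dest: step_inj)

lemma card_partitions_rec:
  assumes "0 < l" "l \<le> n"
  shows "card {xs \<in> partitions n. length xs = l \<and> stat xs \<in> S} =
    (\<Sum>k\<le>l. card {ys \<in> partitions (n - l). length ys = l - k \<and> stat ys \<in> stat_update k -` S})"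
proof -
  have "inj_on (case_prod step)
      (SIGMA k:{..l}. {ys \<in> partitions (n - l). length ys = l - k \<and> stat ys \<in> stat_update k -` S})"
    by (rule inj_on_subset[OF inj_on_step]) auto
  then show ?thesis
    unfolding partitions_eq_image_step[OF assms]
    by (simp add: card_image card_SigmaI finite_partitions)
qed

end

lemma card_partitions_stat_eq:
  assumes "column_decomposition step stat f" "column_decomposition step' stat' f"
    and "stat [] = stat' []"
  shows "card {xs \<in> partitions n. length xs = l \<and> stat xs \<in> S} =
    card {xs \<in> partitions n. length xs = l \<and> stat' xs \<in> S}"
proof (induction n arbitrary: l S rule: less_induct)
  case (less n)
  consider "n = 0" | "0 < l" "l \<le> n" | "0 < n" "l = 0 \<or> n < l" by linarith
  then show ?case
  proof cases
    case 1
    then have "{xs \<in> partitions n. length xs = l \<and> stat xs \<in> S} =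
        {xs \<in> partitions n. length xs = l \<and> stat' xs \<in> S}"
      using assms(3) by (auto simp: partitions_0)
    then show ?thesis by simp
  next
    case 2
    have "card {xs \<in> partitions n. length xs = l \<and> stat xs \<in> S} =
        (\<Sum>k\<le>l. card {ys \<in> partitions (n - l). length ys = l - k \<and> stat ys \<in> f k -` S})"
      by (rule column_decomposition.card_partitions_rec[OF assms(1) 2])
    also have "\<dots> = (\<Sum>k\<le>l. card {ys \<in> partitions (n - l). length ys = l - k \<and> stat' ys \<in> f k -` S})"
      using 2 by (intro sum.cong refl less.IH) simp
    also have "\<dots> = card {xs \<in> partitions n. length xs = l \<and> stat' xs \<in> S}"
      by (rule column_decomposition.card_partitions_rec[OF assms(2) 2, symmetric])
    finally show ?thesis .
  next
    case 3
    have "xs \<notin> partitions n" if "length xs = l" for xs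
    proof
      assume xs: "xs \<in> partitions n"
      then have "xs \<noteq> []" using 3 by (auto simp: partitions_def)
      then show False using 3 that length_partitions_le[OF xs] by simp
    qed
    then have empty: "{xs \<in> partitions n. length xs = l \<and> P xs} = {}" for P by blast
    show ?thesis unfolding empty ..
  qed
qed

section \<open>The 2-measure\<close>

definition column_transition :: "nat \<Rightarrow> nat \<times> bool \<Rightarrow> nat \<times> bool" where
  "column_transition k s = (if 0 < k \<and> \<not> snd s then (Suc (fst s), True) else (fst s, False))"

definition measure_state :: "nat list \<Rightarrow> nat \<times> bool" where
  "measure_state xs =
    (let G = greedy_chain 2 (hd xs + 2) xs in (length G, G \<noteq> [] \<and> last G = 1))"

lemma greedy_chain_append:
  "greedy_chain k t (xs @ ys) =
    greedy_chain k t xs @ greedy_chain k (last (t # greedy_chain k t xs)) ys"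
  by (induction xs arbitrary: t) auto

lemma greedy_chain_map_Suc: "greedy_chain k (Suc t) (map Suc xs) = map Suc (greedy_chain k t xs)"
  by (induction xs arbitrary: t) auto

lemma greedy_chain_replicate:
  assumes "0 < k"
  shows "greedy_chain k t (replicate c x) = (if 0 < c \<and> x + k \<le> t then [x] else [])"
  using assms by (induction c arbitrary: t) auto

lemma measure_state_add_column:
  assumes "\<forall>y\<in>set ys. 0 < y"
  shows "measure_state (add_column k ys) = column_transition k (measure_state ys)"
proof (cases ys)
  case Nil
  have "measure_state [] = (0, False)" by (simp add: measure_state_def)
  moreover have "measure_state (replicate (Suc c) 1) = (1, True)" for c
    by (simp add: measure_state_def greedy_chain_replicate del: replicate_Suc)
  ultimately show ?thesis
    using Nil by (cases k) (simp_all add: add_column_def column_transition_def del: replicate_Suc)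
next
  case (Cons y ys')
  define G where "G = greedy_chain 2 (y + 2) ys"
  have "G \<noteq> []" using Cons by (simp add: G_def)
  moreover have "last G \<in> set ys"
    using last_in_set[OF \<open>G \<noteq> []\<close>] greedy_chain_set unfolding G_def by blast
  ultimately have "0 < last G" "measure_state ys = (length G, last G = 1)"
    using assms Cons by (auto simp: measure_state_def G_def)
  have "greedy_chain 2 (hd (add_column k ys) + 2) (add_column k ys)
      = greedy_chain 2 (Suc (y + 2)) (map Suc ys @ replicate k 1)"
    using Cons by (simp add: add_column_def)
  also have "\<dots> = map Suc G @ greedy_chain 2 (Suc (last G)) (replicate k 1)"
    using \<open>G \<noteq> []\<close> by (simp add: greedy_chain_append greedy_chain_map_Suc last_map G_def)
  also have "\<dots> = map Suc G @ (if 0 < k \<and> last G \<noteq> 1 then [1] else [])"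
    using \<open>0 < last G\<close> by (simp add: greedy_chain_replicate)
  finally show ?thesis
    using \<open>G \<noteq> []\<close> \<open>0 < last G\<close> \<open>measure_state ys = (length G, last G = 1)\<close>
    by (simp add: measure_state_def column_transition_def last_map)
qed

lemma column_decomposition_add_column:
  "column_decomposition add_column measure_state column_transition"
proof
  fix ys n k
  assume ys: "ys \<in> partitions n"
  then show "add_column k ys \<in> partitions (n + length ys + k)" by (rule add_column_partitions)
  show "length (add_column k ys) = length ys + k" by simp
  show "measure_state (add_column k ys) = column_transition k (measure_state ys)"
    using ys by (intro measure_state_add_column) (simp add: partitions_def)
next
  fix ys n ys' n' k k'
  assume "ys \<in> partitions n" "ys' \<in> partitions n'" and eq: "add_column k ys = add_column k' ys'"
  then have "\<forall>y\<in>set ys. 0 < y" "\<forall>y\<in>set ys'. 0 < y" by (simp_all add: partitions_def)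
  then show "k = k' \<and> ys = ys'"
    using remove_add_column[of ys k] remove_add_column[of ys' k'] eq by simp
next
  fix zs n
  assume "zs \<in> partitions n"
  then show "\<exists>k n' ys. ys \<in> partitions n' \<and> add_column k ys = zs"
    using add_remove_column remove_column_partitions by blast
qed

section \<open>The Durfee square\<close>

lemma durfee_append:
  assumes "\<forall>a\<in>set A. length A \<le> a" "\<forall>b\<in>set B. b \<le> length A"
  shows "durfee (A @ B) = length A"
  unfolding durfee_def
proof (rule Greatest_equality)
  show "length A \<le> length (filter (\<lambda>x. length A \<le> x) (A @ B))"
    using assms(1) by (simp add: filter_id_conv)
next
  fix s assume s: "s \<le> length (filter (\<lambda>x. s \<le> x) (A @ B))"
  show "s \<le> length A"
  proof (rule ccontr)
    assume "\<not> s \<le> length A"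
    then have "filter (\<lambda>x. s \<le> x) B = []" using assms(2) by (auto simp: filter_empty_conv)
    then have "length (filter (\<lambda>x. s \<le> x) (A @ B)) \<le> length A" by (simp add: length_filter_le)
    then show False using s \<open>\<not> s \<le> length A\<close> by simp
  qed
qed

lemma sorted_durfee_split:
  "sorted_wrt (\<ge>) xs \<Longrightarrow>
    \<exists>A B. xs = A @ B \<and> (\<forall>a\<in>set A. length A \<le> a) \<and> (\<forall>b\<in>set B. b \<le> length A)"
proof (induction xs rule: rev_induct)
  case Nil
  then show ?case by simp
next
  case (snoc x xs)
  then obtain A B where AB: "xs = A @ B" "\<forall>a\<in>set A. length A \<le> a" "\<forall>b\<in>set B. b \<le> length A"
    by (auto simp: sorted_wrt_append)
  have x_le: "\<forall>y\<in>set xs. x \<le> y" using snoc.prems by (simp add: sorted_wrt_append)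
  show ?case
  proof (cases "B = [] \<and> length A < x")
    case True
    then have "xs @ [x] = (A @ [x]) @ [] \<and> (\<forall>a\<in>set (A @ [x]). length (A @ [x]) \<le> a)
        \<and> (\<forall>b\<in>set []. b \<le> length (A @ [x]))"
      using AB x_le by auto
    then show ?thesis by (intro exI)
  next
    case False
    then have "x \<le> length A" using AB x_le by (cases B) auto
    then have "xs @ [x] = A @ (B @ [x]) \<and> (\<forall>a\<in>set A. length A \<le> a)
        \<and> (\<forall>b\<in>set (B @ [x]). b \<le> length A)"
      using AB by auto
    then show ?thesis by (intro exI)
  qed
qed

lemma durfee_split:
  assumes "sorted_wrt (\<ge>) xs"
  shows "durfee xs \<le> length xs" "\<forall>a\<in>set (take (durfee xs) xs). durfee xs \<le> a"
    "\<forall>b\<in>set (drop (durfee xs) xs). b \<le> durfee xs"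
proof -
  obtain A B where "xs = A @ B" "\<forall>a\<in>set A. length A \<le> a" "\<forall>b\<in>set B. b \<le> length A"
    using sorted_durfee_split[OF assms] by blast
  moreover from this have "durfee xs = length A" by (simp add: durfee_append)
  ultimately show "durfee xs \<le> length xs" "\<forall>a\<in>set (take (durfee xs) xs). durfee xs \<le> a"
    "\<forall>b\<in>set (drop (durfee xs) xs). b \<le> durfee xs" by simp_all
qed

lemma replicate_count_list_removeAll:
  "sorted_wrt (\<ge>) B \<Longrightarrow> \<forall>b\<in>set B. b \<le> (d :: nat) \<Longrightarrow>
    replicate (count_list B d) d @ removeAll d B = B"
proof (induction B)
  case Nil
  then show ?case by simp
next
  case (Cons b B)
  show ?case
  proof (cases "b = d")
    case True
    then show ?thesis using Cons by simp
  next
    case False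
    then have "d \<notin> set (b # B)" using Cons.prems by fastforce
    then show ?thesis by (simp add: removeAll_id)
  qed
qed

(* For a partition with Durfee side d: the d-th part equals d. *)
definition durfee_tight :: "nat list \<Rightarrow> bool" where
  "durfee_tight xs \<longleftrightarrow> durfee xs \<in> set (take (durfee xs) xs)"

definition durfee_state :: "nat list \<Rightarrow> nat \<times> bool" where
  "durfee_state xs = (durfee xs, durfee_tight xs)"

definition durfee_step :: "nat \<Rightarrow> nat list \<Rightarrow> nat list" where
  "durfee_step k ys =
    (let d = durfee ys; A = take d ys; B = drop d ys; j = count_list B d in
     if 0 < k \<and> \<not> durfee_tight ys then A @ Suc d # add_column (k - 1) B
     else map (\<lambda>a. a + Suc j) A @ add_column (j + k) (removeAll d B))"

(* In the loose case the shift j is read off the smallest of the first M parts: it is M + j + 1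
  when k > 0, since the preimage is then tight, and at least that when k = 0 (see min_shift_eq). *)
definition durfee_unstep :: "nat list \<Rightarrow> nat \<times> nat list" where
  "durfee_unstep zs =
    (let M = durfee zs; A = take M zs; B = drop M zs; t = count_list B 1; R = remove_column B in
     if durfee_tight zs then (Suc t, butlast A @ R)
     else let j = min t (Min (set A) - Suc M)
       in (t - j, map (\<lambda>a. a - Suc j) A @ replicate j M @ R))"

lemma durfee_step_grow_form:
  assumes "\<forall>a\<in>set A. length A < a" "\<forall>b\<in>set B. b \<le> length A" "0 < k"
  shows "durfee_step k (A @ B) = A @ Suc (length A) # add_column (k - 1) B"
proof -
  have d: "durfee (A @ B) = length A" using assms(1,2) by (intro durfee_append) auto
  then have "\<not> durfee_tight (A @ B)" using assms(1) by (auto simp: durfee_tight_def)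
  then show ?thesis using d \<open>0 < k\<close> by (simp add: durfee_step_def Let_def)
qed

lemma durfee_step_widen_form:
  assumes "\<forall>a\<in>set A. length A \<le> a" "\<forall>g\<in>set G. g < length A" "0 < k \<Longrightarrow> length A \<in> set A"
  shows "durfee_step k (A @ replicate j (length A) @ G) =
    map (\<lambda>a. a + Suc j) A @ add_column (j + k) G"
proof -
  let ?ys = "A @ replicate j (length A) @ G"
  have d: "durfee ?ys = length A" using assms(1,2) by (intro durfee_append) fastforce+
  then have not_grow: "\<not> (0 < k \<and> \<not> durfee_tight ?ys)"
    using assms(3) by (auto simp: durfee_tight_def)
  have "count_list (replicate j (length A) @ G) (length A) = j"
    "removeAll (length A) (replicate j (length A) @ G) = G"
    using assms(2) by (auto simp: count_list_replicate removeAll_filter_not_eq filter_id_conv)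
  then show ?thesis
    using d unfolding durfee_step_def Let_def if_not_P[OF not_grow] by simp
qed

lemma durfee_grow:
  assumes A: "sorted_wrt (\<ge>) A" "\<forall>a\<in>set A. length A < a"
    and B: "B \<in> partitions m" "\<forall>b\<in>set B. b \<le> length A" and "0 < k"
  defines "zs \<equiv> A @ Suc (length A) # add_column (k - 1) B"
  shows "zs \<in> partitions (sum_list A + m + length A + length B + k)"
    and "durfee zs = Suc (length A)" and "durfee_tight zs" and "durfee_unstep zs = (k, A @ B)"
proof -
  have pos: "\<forall>y\<in>set B. 0 < y" using B(1) by (simp add: partitions_def)
  have col: "add_column (k - 1) B \<in> partitions (m + length B + (k - 1))"
    by (rule add_column_partitions[OF B(1)])
  have "\<forall>y\<in>set (add_column (k - 1) B). y \<le> Suc (length A)"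
    using B(2) by (auto simp: add_column_def)
  then have d: "durfee zs = Suc (length A)"
    using durfee_append[of "A @ [Suc (length A)]"] A(2) unfolding zs_def by fastforce
  then show "durfee zs = Suc (length A)" .
  have "zs = (A @ [Suc (length A)]) @ add_column (k - 1) B" unfolding zs_def by simp
  then have take: "take (durfee zs) zs = A @ [Suc (length A)]" and
    drop: "drop (durfee zs) zs = add_column (k - 1) B"
    unfolding d by simp_all
  then show tight: "durfee_tight zs" using d by (simp add: durfee_tight_def)
  show "zs \<in> partitions (sum_list A + m + length A + length B + k)"
    using A col \<open>\<forall>y\<in>set (add_column (k - 1) B). y \<le> Suc (length A)\<close> \<open>0 < k\<close>
    unfolding zs_def by (fastforce simp: partitions_def sorted_wrt_append)
  show "durfee_unstep zs = (k, A @ B)"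
    using tight take drop \<open>0 < k\<close> remove_add_column[OF pos]
    by (simp add: durfee_unstep_def Let_def)
qed

lemma min_shift_eq:
  assumes "\<forall>a\<in>set A. length A \<le> a" "0 < k \<Longrightarrow> length A \<in> set A" "A = [] \<Longrightarrow> j = 0"
  shows "min (j + k) (Min (set (map (\<lambda>a. a + Suc j) A)) - Suc (length A)) = j"
proof (cases "A = []")
  case False
  then have "Min (set (map (\<lambda>a. a + Suc j) A)) = Min (set A) + Suc j"
    by (simp add: mono_Min_commute[symmetric] mono_def)
  moreover have "length A \<le> Min (set A)" using assms(1) False by simp
  moreover have "Min (set A) = length A" if "0 < k"
    using assms(2)[OF that] assms(1) by (intro Min_eqI) auto
  ultimately show ?thesis by (cases "k = 0") auto
next
  case True
  then have "j = 0" "k = 0" using assms(2,3) by auto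
  then show ?thesis by simp
qed

lemma durfee_widen:
  assumes A: "sorted_wrt (\<ge>) A" "\<forall>a\<in>set A. length A \<le> a"
    and G: "G \<in> partitions m" "\<forall>g\<in>set G. g < length A"
    and tight: "0 < k \<Longrightarrow> length A \<in> set A" and nonempty: "A = [] \<Longrightarrow> j = 0"
  defines "zs \<equiv> map (\<lambda>a. a + Suc j) A @ add_column (j + k) G"
  shows "zs \<in> partitions (sum_list A + length A * Suc j + m + length G + j + k)"
    and "durfee zs = length A" and "\<not> durfee_tight zs"
    and "durfee_unstep zs = (k, A @ replicate j (length A) @ G)"
proof -
  have pos: "\<forall>y\<in>set G. 0 < y" using G(1) by (simp add: partitions_def)
  have col: "add_column (j + k) G \<in> partitions (m + length G + (j + k))"
    by (rule add_column_partitions[OF G(1)])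
  have "A = [] \<Longrightarrow> j + k = 0" using nonempty tight by auto
  then have below: "\<forall>y\<in>set (add_column (j + k) G). y \<le> length A"
    using G(2) by (cases A) (auto simp: add_column_def Suc_le_eq)
  have "\<forall>a\<in>set (map (\<lambda>a. a + Suc j) A). length (map (\<lambda>a. a + Suc j) A) \<le> a"
    using A(2) by fastforce
  then have d: "durfee zs = length A"
    using durfee_append[of "map (\<lambda>a. a + Suc j) A" "add_column (j + k) G"] below
    unfolding zs_def by simp
  then show "durfee zs = length A" .
  have take: "take (durfee zs) zs = map (\<lambda>a. a + Suc j) A" and
    drop: "drop (durfee zs) zs = add_column (j + k) G"
    unfolding d unfolding zs_def by simp_all
  then show loose: "\<not> durfee_tight zs" using d A(2) by (auto simp: durfee_tight_def)
  have "\<forall>a\<in>set A. \<forall>y\<in>set (add_column (j + k) G). y \<le> a + Suc j"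
    using A(2) below by fastforce
  then show "zs \<in> partitions (sum_list A + length A * Suc j + m + length G + j + k)"
    using A(1) col sum_list_map_add_const[of "Suc j" A] unfolding zs_def
    by (auto simp: partitions_def sorted_wrt_append sorted_wrt_map)
  have "min (j + k) (Min (set (map (\<lambda>a. a + Suc j) A)) - Suc (length A)) = j"
    using min_shift_eq[OF A(2) tight nonempty] .
  then show "durfee_unstep zs = (k, A @ replicate j (length A) @ G)"
    using loose take drop d remove_add_column[OF pos]
    by (simp add: durfee_unstep_def Let_def comp_def)
qed

lemma durfee_step_grow:
  assumes ys: "ys \<in> partitions n" and "0 < k" "\<not> durfee_tight ys"
  shows "durfee_step k ys \<in> partitions (n + length ys + k)"
    and "length (durfee_step k ys) = length ys + k"
    and "durfee_state (durfee_step k ys) = (Suc (durfee ys), True)"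
    and "durfee_unstep (durfee_step k ys) = (k, ys)"
proof -
  define d A B where "d = durfee ys" "A = take d ys" "B = drop d ys"
  have sorted: "sorted_wrt (\<ge>) ys" using ys by (simp add: partitions_def)
  have "length A = d" and A_gt: "\<forall>a\<in>set A. length A < a" and B_le: "\<forall>b\<in>set B. b \<le> length A"
    using durfee_split[OF sorted] \<open>\<not> durfee_tight ys\<close>
    unfolding d_A_B_def durfee_tight_def by (auto simp: le_less)
  have "sorted_wrt (\<ge>) A" and B: "B \<in> partitions (n - sum_list A)"
    using sorted drop_partitions[OF ys] unfolding d_A_B_def by simp_all
  have "ys = A @ B" unfolding d_A_B_def by simp
  then have step: "durfee_step k ys = A @ Suc (length A) # add_column (k - 1) B"
    using durfee_step_grow_form[OF A_gt B_le \<open>0 < k\<close>] by simp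
  have sum: "n + length ys + k = sum_list A + (n - sum_list A) + length A + length B + k"
    using ys \<open>ys = A @ B\<close> by (simp add: partitions_def)
  note grow = durfee_grow[OF \<open>sorted_wrt (\<ge>) A\<close> A_gt B B_le \<open>0 < k\<close>]
  show "durfee_step k ys \<in> partitions (n + length ys + k)"
    using grow(1) unfolding step sum .
  show "length (durfee_step k ys) = length ys + k"
    using \<open>0 < k\<close> unfolding step by (subst \<open>ys = A @ B\<close>) simp
  show "durfee_state (durfee_step k ys) = (Suc (durfee ys), True)"
    using grow(2,3) \<open>length A = d\<close> unfolding step durfee_state_def d_A_B_def by simp
  show "durfee_unstep (durfee_step k ys) = (k, ys)"
    using grow(4) \<open>ys = A @ B\<close> unfolding step by simp
qed

lemma durfee_step_widen:
  assumes ys: "ys \<in> partitions n" and not_grow: "\<not> (0 < k \<and> \<not> durfee_tight ys)"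
  shows "durfee_step k ys \<in> partitions (n + length ys + k)"
    and "length (durfee_step k ys) = length ys + k"
    and "durfee_state (durfee_step k ys) = (durfee ys, False)"
    and "durfee_unstep (durfee_step k ys) = (k, ys)"
proof -
  define d A B where "d = durfee ys" "A = take d ys" "B = drop d ys"
  define j G where "j = count_list B d" "G = removeAll d B"
  have sorted: "sorted_wrt (\<ge>) ys" using ys by (simp add: partitions_def)
  have "length A = d" and A_ge: "\<forall>a\<in>set A. length A \<le> a" and B_le: "\<forall>b\<in>set B. b \<le> length A"
    using durfee_split[OF sorted] unfolding d_A_B_def by auto
  have "sorted_wrt (\<ge>) A" and B: "B \<in> partitions (n - sum_list A)"
    using sorted drop_partitions[OF ys] unfolding d_A_B_def by simp_all
  have G: "G \<in> partitions (sum_list G)" "\<forall>g\<in>set G. g < length A"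
    using B B_le \<open>length A = d\<close> unfolding j_G_def
    by (auto simp: partitions_def removeAll_filter_not_eq sorted_wrt_filter)
  have tight: "0 < k \<Longrightarrow> length A \<in> set A"
    using not_grow \<open>length A = d\<close> unfolding durfee_tight_def d_A_B_def by simp
  have nonempty: "A = [] \<Longrightarrow> j = 0"
    using B B_le unfolding j_G_def by (auto simp: partitions_def count_list_0_iff)
  have "B = replicate j (length A) @ G"
    using replicate_count_list_removeAll B B_le \<open>length A = d\<close> unfolding j_G_def
    by (simp add: partitions_def)
  then have ys_eq: "ys = A @ replicate j (length A) @ G"
    unfolding d_A_B_def by (metis append_take_drop_id)
  then have step: "durfee_step k ys = map (\<lambda>a. a + Suc j) A @ add_column (j + k) G"
    using durfee_step_widen_form[OF A_ge G(2) tight] by simp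
  have sum: "n + length ys + k = sum_list A + length A * Suc j + sum_list G + length G + j + k"
    using ys ys_eq by (simp add: partitions_def sum_list_replicate algebra_simps)
  note widen = durfee_widen[OF \<open>sorted_wrt (\<ge>) A\<close> A_ge G tight nonempty]
  show "durfee_step k ys \<in> partitions (n + length ys + k)"
    using widen(1) unfolding step sum .
  show "length (durfee_step k ys) = length ys + k"
    unfolding step by (subst ys_eq) simp
  show "durfee_state (durfee_step k ys) = (durfee ys, False)"
    using widen(2,3) \<open>length A = d\<close> unfolding step durfee_state_def d_A_B_def by simp
  show "durfee_unstep (durfee_step k ys) = (k, ys)"
    using widen(4) ys_eq unfolding step by simp
qed

lemma durfee_step_unstep_tight:
  assumes zs: "zs \<in> partitions n" and tight: "durfee_tight zs"
    and unstep: "durfee_unstep zs = (k, ys)"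
  shows "ys \<in> partitions (sum_list ys)" and "durfee_step k ys = zs"
proof -
  define M A B where "M = durfee zs" "A = take M zs" "B = drop M zs"
  define R where "R = remove_column B"
  have sorted: "sorted_wrt (\<ge>) zs" using zs by (simp add: partitions_def)
  have "length A = M" and A_ge: "\<forall>a\<in>set A. M \<le> a" and B_le: "\<forall>b\<in>set B. b \<le> M"
    using durfee_split[OF sorted] unfolding M_A_B_def by auto
  have "M \<in> set A" "sorted_wrt (\<ge>) A" using tight sorted unfolding durfee_tight_def M_A_B_def
    by simp_all
  then obtain A' a where A_eq: "A = A' @ [a]" by (cases A rule: rev_cases) auto
  have "a = M"
    using \<open>M \<in> set A\<close> \<open>sorted_wrt (\<ge>) A\<close> A_ge unfolding A_eq by (auto simp: sorted_wrt_append)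
  have A': "sorted_wrt (\<ge>) A'" "\<forall>a\<in>set A'. length A' < a" "Suc (length A') = M"
    using \<open>sorted_wrt (\<ge>) A\<close> A_ge \<open>length A = M\<close> unfolding A_eq \<open>a = M\<close>
    by (auto simp: sorted_wrt_append)
  have B: "B \<in> partitions (n - sum_list A)" using drop_partitions[OF zs] unfolding M_A_B_def .
  have R: "R \<in> partitions (sum_list R)" "\<forall>r\<in>set R. r \<le> length A'"
    using remove_column_partitions[OF B] remove_column_less[OF B_le] A'(3) unfolding R_def
    by (auto simp: partitions_def less_Suc_eq_le)
  have ys: "k = Suc (count_list B 1)" "ys = A' @ R"
    using unstep tight A_eq unfolding durfee_unstep_def Let_def M_A_B_def R_def by auto
  have "\<forall>a\<in>set A'. \<forall>r\<in>set R. r \<le> a" using A'(2) R(2) by fastforce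
  then show "ys \<in> partitions (sum_list ys)"
    using A' R unfolding ys(2) by (auto simp: partitions_def sorted_wrt_append)
  have "durfee_step k ys = A' @ Suc (length A') # add_column (count_list B 1) R"
    using durfee_step_grow_form[OF A'(2) R(2)] unfolding ys by simp
  also have "\<dots> = A @ B"
    using add_remove_column[OF B] A'(3) \<open>a = M\<close> unfolding A_eq R_def by simp
  also have "\<dots> = zs" unfolding M_A_B_def by simp
  finally show "durfee_step k ys = zs" .
qed

lemma loose_durfee_rows:
  assumes zs: "zs \<in> partitions n" "zs \<noteq> []" and loose: "\<not> durfee_tight zs"
  shows "0 < durfee zs" and "\<forall>a\<in>set (take (durfee zs) zs). durfee zs < a"
proof -
  have sorted: "sorted_wrt (\<ge>) zs" using zs by (simp add: partitions_def)
  show "0 < durfee zs"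
  proof (rule ccontr)
    assume "\<not> 0 < durfee zs"
    then have "\<forall>z\<in>set zs. z \<le> 0" using durfee_split(3)[OF sorted] by simp
    then show False using zs by (cases zs) (auto simp: partitions_def)
  qed
  show "\<forall>a\<in>set (take (durfee zs) zs). durfee zs < a"
    using durfee_split(2)[OF sorted] loose by (auto simp: durfee_tight_def le_less)
qed

lemma widen_form_partitions:
  assumes "sorted_wrt (\<ge>) A" "\<forall>a\<in>set A. length A \<le> a" "0 < length A"
    and "G \<in> partitions m" "\<forall>g\<in>set G. g < length A"
  shows "A @ replicate j (length A) @ G \<in> partitions (sum_list (A @ replicate j (length A) @ G))"
proof -
  have "\<forall>a\<in>set A. \<forall>y\<in>set (replicate j (length A) @ G). y \<le> a"
    using assms(2,5) by fastforce
  moreover have "\<forall>a\<in>set A. 0 < a" using assms(2,3) by (auto intro: less_le_trans)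
  ultimately show ?thesis
    using assms(1,3,4,5)
    by (auto simp: partitions_def sorted_wrt_append sorted_wrt_replicate less_imp_le)
qed

lemma unshift_rows:
  fixes M t :: nat
  assumes "sorted_wrt (\<ge>) A" "\<forall>a\<in>set A. M < a" "A \<noteq> []"
  defines "j \<equiv> min t (Min (set A) - Suc M)"
  shows "sorted_wrt (\<ge>) (map (\<lambda>a. a - Suc j) A)" and "\<forall>a\<in>set A. M + Suc j \<le> a"
    and "j < t \<Longrightarrow> M \<in> set (map (\<lambda>a. a - Suc j) A)"
proof -
  have Min: "Min (set A) \<in> set A" "\<forall>a\<in>set A. Min (set A) \<le> a" "Suc M \<le> Min (set A)"
    using assms(2,3) by (auto simp: Suc_le_eq)
  then have "M + Suc j \<le> Min (set A)" unfolding j_def by (simp add: min_def le_diff_conv2)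
  then show "\<forall>a\<in>set A. M + Suc j \<le> a" using Min(2) by (meson order_trans)
  show "sorted_wrt (\<ge>) (map (\<lambda>a. a - Suc j) A)"
    unfolding sorted_wrt_map by (rule sorted_wrt_mono_rel[OF _ assms(1)]) (simp add: diff_le_mono)
  assume "j < t"
  then have "j = Min (set A) - Suc M" unfolding j_def by linarith
  then show "M \<in> set (map (\<lambda>a. a - Suc j) A)" using Min(1,3) by force
qed

lemma durfee_step_unstep_loose:
  assumes zs: "zs \<in> partitions n" "zs \<noteq> []" and loose: "\<not> durfee_tight zs"
    and unstep: "durfee_unstep zs = (k, ys)"
  shows "ys \<in> partitions (sum_list ys)" and "durfee_step k ys = zs"
proof -
  define M A B where "M = durfee zs" "A = take M zs" "B = drop M zs"
  define t R where "t = count_list B 1" "R = remove_column B"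
  define j where "j = min t (Min (set A) - Suc M)"
  define A' where "A' = map (\<lambda>a. a - Suc j) A"
  have sorted: "sorted_wrt (\<ge>) zs" using zs by (simp add: partitions_def)
  have "length A = M" and B_le: "\<forall>b\<in>set B. b \<le> M"
    using durfee_split[OF sorted] unfolding M_A_B_def by auto
  have "sorted_wrt (\<ge>) A" using sorted unfolding M_A_B_def by simp
  have "0 < M" and A_gt: "\<forall>a\<in>set A. M < a"
    using loose_durfee_rows[OF zs loose] unfolding M_A_B_def .
  then have "A \<noteq> []" using \<open>length A = M\<close> by auto
  note unshift = unshift_rows[OF \<open>sorted_wrt (\<ge>) A\<close> A_gt \<open>A \<noteq> []\<close>, of t,
      folded j_def, folded A'_def]
  have "durfee_unstep zs = (t - j, A' @ replicate j M @ R)"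
    using loose unfolding durfee_unstep_def Let_def M_A_B_def t_R_def j_def A'_def by simp
  then have ys: "k = t - j" "ys = A' @ replicate j M @ R" using unstep by simp_all
  have B: "B \<in> partitions (n - sum_list A)" using drop_partitions[OF zs(1)] unfolding M_A_B_def .
  have R: "R \<in> partitions (sum_list R)" "\<forall>r\<in>set R. r < M"
    using remove_column_partitions[OF B] remove_column_less[OF B_le] unfolding t_R_def
    by (auto simp: partitions_def)
  have A': "\<forall>a\<in>set A'. M \<le> a" "length A' = M"
    using unshift(2) \<open>length A = M\<close> unfolding A'_def by auto
  have tight: "0 < k \<Longrightarrow> M \<in> set A'" using unshift(3) unfolding ys(1) by simp
  show "ys \<in> partitions (sum_list ys)"
    using widen_form_partitions[OF unshift(1), of R "sum_list R" j] A' R \<open>0 < M\<close>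
    unfolding ys(2) by simp
  have "durfee_step k ys = map (\<lambda>a. a + Suc j) A' @ add_column (j + k) R"
    using durfee_step_widen_form[of A' R k j] A' R(2) tight unfolding ys(2) by simp
  also have "\<dots> = A @ add_column t R"
  proof -
    have "map (\<lambda>a. a + Suc j) A' = A"
      unfolding A'_def map_map by (rule map_idI) (use unshift(2) in auto)
    moreover have "j + k = t" unfolding ys(1) j_def by simp
    ultimately show ?thesis by simp
  qed
  also have "\<dots> = A @ B" using add_remove_column[OF B] unfolding t_R_def by simp
  also have "\<dots> = zs" unfolding M_A_B_def by simp
  finally show "durfee_step k ys = zs" .
qed

lemma column_decomposition_durfee_step:
  "column_decomposition durfee_step durfee_state column_transition"
proof
  fix ys n k
  assume ys: "ys \<in> partitions n"
  show "durfee_step k ys \<in> partitions (n + length ys + k)"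
    using durfee_step_grow(1)[OF ys] durfee_step_widen(1)[OF ys] by blast
  show "length (durfee_step k ys) = length ys + k"
    using durfee_step_grow(2)[OF ys] durfee_step_widen(2)[OF ys] by blast
  show "durfee_state (durfee_step k ys) = column_transition k (durfee_state ys)"
    using durfee_step_grow(3)[OF ys] durfee_step_widen(3)[OF ys]
    by (auto simp: column_transition_def durfee_state_def)
next
  fix ys n ys' n' k k'
  assume "ys \<in> partitions n" "ys' \<in> partitions n'" "durfee_step k ys = durfee_step k' ys'"
  then have "(k, ys) = (k', ys')"
    using durfee_step_grow(4) durfee_step_widen(4) by metis
  then show "k = k' \<and> ys = ys'" by simp
next
  fix zs n
  assume "zs \<in> partitions n" "zs \<noteq> []"
  moreover obtain k ys where "durfee_unstep zs = (k, ys)" by (cases "durfee_unstep zs")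
  ultimately show "\<exists>k n' ys. ys \<in> partitions n' \<and> durfee_step k ys = zs"
    using durfee_step_unstep_tight durfee_step_unstep_loose by metis
qed

theorem corollary1p5:
  fixes n l m :: nat
  shows "card {xs \<in> partitions n. length xs = l \<and> k_measure 2 xs = m}
       = card {xs \<in> partitions n. length xs = l \<and> durfee xs = m}"
proof -
  have measure: "{xs \<in> partitions n. length xs = l \<and> k_measure 2 xs = m}
      = {xs \<in> partitions n. length xs = l \<and> measure_state xs \<in> {s. fst s = m}}"
    by (auto simp: measure_state_def Let_def k_measure_eq_length_greedy_chain partitions_def)
  have durfee: "{xs \<in> partitions n. length xs = l \<and> durfee xs = m}
      = {xs \<in> partitions n. length xs = l \<and> durfee_state xs \<in> {s. fst s = m}}"
    by (auto simp: durfee_state_def)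
  have "measure_state [] = durfee_state []"
    using durfee_append[of "[]" "[]"]
    by (simp add: measure_state_def durfee_state_def durfee_tight_def)
  then show ?thesis
    unfolding measure durfee
    by (rule card_partitions_stat_eq[OF column_decomposition_add_column
          column_decomposition_durfee_step])
qed

end
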